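(* Let $N\ge 2$ and let $K=\{x\in\mathbb{R}^N : x_i^2+x_{i+1}^2\le 1\ \text{for all } 1\le i\le N-1\}$. For every subset $I\subset\{2,\dots,N-2\}$ containing no two consecutive integers, let $$K_I=\{x\in K : x_i^2+x_{i+1}^2=1 \text{ for } i\in\{1,\dots,N-1\}\setminus I,\ \ x_i^2+x_{i+1}^2<1\text{ for } i\in I\}.$$ Then the set of extreme points of $K$ is $\bigcup_I K_I$, the union running over all subsets $I\subset\{2,\dots,N-2\}$ with no two consecutive elements. *)

theory Defs
  imports "HOL-Analysis.Analysis"
begin

text \<open>Points of R^N are vectors x :: real ^ 'n with N = CARD('n); the coordinates
  are labelled 1..N via a bijection idx :: nat => 'n from {1..N} onto UNIV,
  so x_i is x $ idx i.\<close>

definition Kset :: "nat \<Rightarrow> (nat \<Rightarrow> 'n) \<Rightarrow> (real ^ 'n::finite) set" where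
  "Kset N idx = {x. \<forall>i\<in>{1..N-1}. (x $ idx i)^2 + (x $ idx (i+1))^2 \<le> 1}"

definition KIset :: "nat \<Rightarrow> (nat \<Rightarrow> 'n) \<Rightarrow> nat set \<Rightarrow> (real ^ 'n::finite) set" where
  "KIset N idx I = {x \<in> Kset N idx.
      (\<forall>i\<in>{1..N-1} - I. (x $ idx i)^2 + (x $ idx (i+1))^2 = 1) \<and>
      (\<forall>i\<in>I. (x $ idx i)^2 + (x $ idx (i+1))^2 < 1)}"

definition admissible_index_sets :: "nat \<Rightarrow> nat set set" where
  "admissible_index_sets N = {I. I \<subseteq> {2..N-2} \<and> (\<forall>i\<in>I. i+1 \<notin> I)}"

end

theory Submission
  imports Defs
begin

text \<open>Each constraint says that the pair (x_i, x_{i+1}) lies in the closed unit disc, which is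
  strictly convex. Hence if every coordinate occurs in a tight constraint, a segment in K through x
  is constant in every coordinate, and x is extreme. Conversely, if a coordinate x_k occurs only in
  slack constraints, x_k can be moved a little in both directions within K, so x is not extreme.
  For N \<ge> 2 the sets I of slack constraints for which every coordinate occurs in a tight one are
  exactly the admissible ones: constraints 1 and N-1 must be tight, and two consecutive slack
  constraints leave their common coordinate uncovered.\<close>

lemma unit_ball_strictly_convex:
  fixes a b :: "'a::real_inner"
  assumes "norm a \<le> 1" "norm b \<le> 1" "0 < u" "u < 1"
    and "norm ((1 - u) *\<^sub>R a + u *\<^sub>R b) = 1"
  shows "a = b"
proof -
  have "(norm ((1 - u) *\<^sub>R a + u *\<^sub>R b))\<^sup>2 =
        (1 - u) * (norm a)\<^sup>2 + u * (norm b)\<^sup>2 - u * (1 - u) * (norm (a - b))\<^sup>2"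
    by (simp add: power2_norm_eq_inner inner_diff inner_add algebra_simps)
  also have "\<dots> \<le> 1 - u * (1 - u) * (norm (a - b))\<^sup>2"
  proof -
    have "(norm a)\<^sup>2 \<le> 1" "(norm b)\<^sup>2 \<le> 1"
      using assms(1,2) by (simp_all add: power_le_one)
    then have "(1 - u) * (norm a)\<^sup>2 + u * (norm b)\<^sup>2 \<le> (1 - u) + u"
      using assms(3,4) by (intro add_mono) (simp_all add: mult_left_le)
    then show ?thesis by simp
  qed
  finally have "u * (1 - u) * (norm (a - b))\<^sup>2 \<le> 0"
    using assms(5) by simp
  with assms(3,4) show "a = b"
    by (simp add: mult_le_0_iff)
qed

lemma not_extreme_point_of_two_sided_line:
  fixes x v :: "'a::real_vector"
  assumes "\<forall>\<^sub>F t in at 0. x + t *\<^sub>R v \<in> S" and "v \<noteq> 0"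
  shows "\<not> x extreme_point_of S"
proof
  assume ext: "x extreme_point_of S"
  obtain d :: real where "d > 0" and d: "\<And>t. t \<noteq> 0 \<Longrightarrow> dist t 0 < d \<Longrightarrow> x + t *\<^sub>R v \<in> S"
    using assms(1) unfolding eventually_at by blast
  define a b where "a = x - (d/2) *\<^sub>R v" and "b = x + (d/2) *\<^sub>R v"
  have "a \<in> S" "b \<in> S"
    using d[of "-d/2"] d[of "d/2"] \<open>d > 0\<close> by (auto simp: a_def b_def)
  moreover have "b - a = d *\<^sub>R v"
    by (simp add: a_def b_def scaleR_add_left[symmetric])
  then have "a \<noteq> b"
    using \<open>d > 0\<close> assms(2) by auto
  moreover have "x = midpoint a b"
    by (simp add: a_def b_def midpoint_def scaleR_add_right[symmetric])
  ultimately show False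
    using ext midpoint_in_open_segment unfolding extreme_point_of_def by metis
qed

definition slack_indices :: "nat \<Rightarrow> (nat \<Rightarrow> 'n) \<Rightarrow> (real ^ 'n::finite) \<Rightarrow> nat set" where
  "slack_indices N idx x = {i \<in> {1..N-1}. (x $ idx i)^2 + (x $ idx (i+1))^2 < 1}"

lemma admissible_index_sets_iff_covering:
  assumes "N \<ge> 2" and "I \<subseteq> {1..N-1}"
  shows "I \<in> admissible_index_sets N \<longleftrightarrow> (\<forall>k\<in>{1..N}. \<exists>i\<in>{1..N-1} - I. k = i \<or> k = i + 1)"
proof
  assume "I \<in> admissible_index_sets N"
  then have I: "I \<subseteq> {2..N-2}" "\<And>i. i \<in> I \<Longrightarrow> i + 1 \<notin> I"
    unfolding admissible_index_sets_def by auto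
  show "\<forall>k\<in>{1..N}. \<exists>i\<in>{1..N-1} - I. k = i \<or> k = i + 1"
  proof
    fix k assume k: "k \<in> {1..N}"
    consider "k = 1" | "k \<ge> 2" "k - 1 \<notin> I" | "k \<ge> 2" "k - 1 \<in> I"
      using k by force
    then show "\<exists>i\<in>{1..N-1} - I. k = i \<or> k = i + 1"
    proof cases
      case 1
      then show ?thesis using I(1) assms(1) by (intro bexI[of _ 1]) auto
    next
      case 2
      then show ?thesis using k by (intro bexI[of _ "k - 1"]) auto
    next
      case 3
      then have "k \<notin> I" "k - 1 \<le> N - 2"
        using I(1) I(2)[of "k - 1"] by auto
      then show ?thesis using 3 by (intro bexI[of _ k]) auto
    qed
  qed
next
  assume cover: "\<forall>k\<in>{1..N}. \<exists>i\<in>{1..N-1} - I. k = i \<or> k = i + 1"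
  have "1 \<notin> I" "N - 1 \<notin> I"
    using cover assms(1) by force+
  have "I \<subseteq> {2..N-2}"
  proof
    fix i assume "i \<in> I"
    then have "i \<in> {1..N-1}" "i \<noteq> 1" "i \<noteq> N - 1"
      using assms(2) \<open>1 \<notin> I\<close> \<open>N - 1 \<notin> I\<close> by auto
    then show "i \<in> {2..N-2}" by auto
  qed
  moreover have "i + 1 \<notin> I" if "i \<in> I" for i
    using cover that assms(2) by fastforce
  ultimately show "I \<in> admissible_index_sets N"
    unfolding admissible_index_sets_def by blast
qed

lemma Kset_perturb_slack_coordinate:
  fixes x :: "real ^ 'n::finite"
  assumes inj: "inj_on idx {1..N}" and x: "x \<in> Kset N idx" and k: "k \<in> {1..N}"
    and slack: "\<And>i. i \<in> {1..N-1} \<Longrightarrow> k = i \<or> k = i + 1 \<Longrightarrow> i \<in> slack_indices N idx x"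
  shows "\<forall>\<^sub>F t in at 0. x + t *\<^sub>R axis (idx k) 1 \<in> Kset N idx"
proof -
  define y where "y t = x + t *\<^sub>R axis (idx k) 1" for t :: real
  have "\<forall>\<^sub>F t in at 0. (y t $ idx i)^2 + (y t $ idx (i+1))^2 \<le> 1" if i: "i \<in> {1..N-1}" for i
  proof (cases "k = i \<or> k = i + 1")
    case True
    have "isCont (\<lambda>t. (y t $ idx i)^2 + (y t $ idx (i+1))^2) 0"
      unfolding y_def by (intro continuous_intros)
    moreover have "(y 0 $ idx i)^2 + (y 0 $ idx (i+1))^2 < 1"
      using slack[OF i True] by (simp add: y_def slack_indices_def)
    ultimately have "\<forall>\<^sub>F t in at 0. (y t $ idx i)^2 + (y t $ idx (i+1))^2 < 1"
      unfolding isCont_def by (rule order_tendstoD(2))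
    then show ?thesis
      by (rule eventually_mono) simp
  next
    case False
    then have "idx i \<noteq> idx k" "idx (i+1) \<noteq> idx k"
      using inj i k by (auto dest: inj_onD)
    then show ?thesis
      using x i by (simp add: y_def Kset_def axis_def)
  qed
  then show ?thesis
    unfolding Kset_def y_def by (auto intro: eventually_ball_finite)
qed

lemma extreme_point_of_Kset_imp_covered:
  fixes x :: "real ^ 'n::finite"
  assumes "inj_on idx {1..N}" and "x extreme_point_of Kset N idx" and "k \<in> {1..N}"
  shows "\<exists>i\<in>{1..N-1} - slack_indices N idx x. k = i \<or> k = i + 1"
proof (rule ccontr)
  assume "\<not> ?thesis"
  moreover have "x \<in> Kset N idx"
    using assms(2) by (simp add: extreme_point_of_def)
  ultimately have "\<forall>\<^sub>F t in at 0. x + t *\<^sub>R axis (idx k) 1 \<in> Kset N idx"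
    using assms(1,3) by (intro Kset_perturb_slack_coordinate) auto
  then have "\<not> x extreme_point_of Kset N idx"
    by (rule not_extreme_point_of_two_sided_line) (simp add: axis_eq_0_iff)
  with assms(2) show False by contradiction
qed

lemma covered_imp_extreme_point_of_Kset:
  fixes x :: "real ^ 'n::finite"
  assumes surj: "idx ` {1..N} = UNIV" and x: "x \<in> Kset N idx"
    and cover: "\<And>k. k \<in> {1..N} \<Longrightarrow> \<exists>i\<in>{1..N-1} - slack_indices N idx x. k = i \<or> k = i + 1"
  shows "x extreme_point_of Kset N idx"
  unfolding extreme_point_of_def
proof (intro conjI ballI notI x)
  fix a b assume a: "a \<in> Kset N idx" and b: "b \<in> Kset N idx" and "x \<in> open_segment a b"
  then obtain u where "a \<noteq> b" and u: "0 < u" "u < 1" and xu: "x = (1 - u) *\<^sub>R a + u *\<^sub>R b"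
    unfolding in_segment by blast
  define pair where "pair z i = (z $ idx i, z $ idx (i+1))" for z :: "real ^ 'n" and i
  have norm_pair: "norm (pair z i) = sqrt ((z $ idx i)^2 + (z $ idx (i+1))^2)" for z i
    by (simp add: pair_def norm_Pair)
  have "pair a i = pair b i" if i: "i \<in> {1..N-1} - slack_indices N idx x" for i
  proof (rule unit_ball_strictly_convex[OF _ _ u])
    show "norm (pair a i) \<le> 1" "norm (pair b i) \<le> 1"
      using a b i by (auto simp: norm_pair Kset_def)
    have "(x $ idx i)^2 + (x $ idx (i+1))^2 = 1"
      using x i by (force simp: Kset_def slack_indices_def)
    moreover have "pair x i = (1 - u) *\<^sub>R pair a i + u *\<^sub>R pair b i"
      by (simp add: pair_def xu)
    ultimately show "norm ((1 - u) *\<^sub>R pair a i + u *\<^sub>R pair b i) = 1"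
      by (metis norm_pair real_sqrt_one)
  qed
  then have "a $ idx k = b $ idx k" if "k \<in> {1..N}" for k
    using cover[OF that] by (auto simp: pair_def)
  moreover have "\<exists>k\<in>{1..N}. j = idx k" for j
    using surj by blast
  ultimately have "a = b"
    by (metis vec_eq_iff)
  with \<open>a \<noteq> b\<close> show False by contradiction
qed

lemma extreme_point_of_Kset_iff:
  fixes x :: "real ^ 'n::finite"
  assumes "bij_betw idx {1..N} UNIV"
  shows "x extreme_point_of Kset N idx \<longleftrightarrow>
    x \<in> Kset N idx \<and> (\<forall>k\<in>{1..N}. \<exists>i\<in>{1..N-1} - slack_indices N idx x. k = i \<or> k = i + 1)"
proof -
  have "inj_on idx {1..N}" "idx ` {1..N} = UNIV"
    using assms by (simp_all add: bij_betw_def)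
  then show ?thesis
    using extreme_point_of_Kset_imp_covered covered_imp_extreme_point_of_Kset
    unfolding extreme_point_of_def by blast
qed

lemma mem_KIset_iff:
  assumes "I \<subseteq> {1..N-1}"
  shows "x \<in> KIset N idx I \<longleftrightarrow> x \<in> Kset N idx \<and> I = slack_indices N idx x"
proof
  assume x: "x \<in> KIset N idx I"
  then have "I \<subseteq> slack_indices N idx x"
    using assms by (auto simp: KIset_def slack_indices_def)
  moreover have "slack_indices N idx x \<subseteq> I"
    using x by (force simp: KIset_def slack_indices_def)
  ultimately show "x \<in> Kset N idx \<and> I = slack_indices N idx x"
    using x by (auto simp: KIset_def)
next
  assume x: "x \<in> Kset N idx \<and> I = slack_indices N idx x"
  have "(x $ idx i)^2 + (x $ idx (i+1))^2 = 1" if "i \<in> {1..N-1} - I" for i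
    using x that unfolding Kset_def slack_indices_def by force
  with x show "x \<in> KIset N idx I"
    by (auto simp: KIset_def slack_indices_def)
qed

theorem mainTheorem6:
  fixes N :: nat and idx :: "nat \<Rightarrow> 'n::finite"
  assumes "N = CARD('n)" and "N \<ge> 2" and "bij_betw idx {1..N} UNIV"
  shows "{x. x extreme_point_of Kset N idx} =
         (\<Union>I\<in>admissible_index_sets N. KIset N idx I)"
proof -
  have admissible_sub: "I \<subseteq> {1..N-1}" if "I \<in> admissible_index_sets N" for I
  proof -
    have "{2..N-2} \<subseteq> {1..N-1}" by auto
    then show ?thesis using that by (auto simp: admissible_index_sets_def)
  qed
  have slack_sub: "slack_indices N idx x \<subseteq> {1..N-1}" for x
    by (auto simp: slack_indices_def)
  have "x extreme_point_of Kset N idx \<longleftrightarrow>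
      x \<in> Kset N idx \<and> slack_indices N idx x \<in> admissible_index_sets N" for x
    by (simp add: extreme_point_of_Kset_iff[OF assms(3)]
        admissible_index_sets_iff_covering[OF assms(2) slack_sub])
  moreover have "x \<in> (\<Union>I\<in>admissible_index_sets N. KIset N idx I) \<longleftrightarrow>
      x \<in> Kset N idx \<and> slack_indices N idx x \<in> admissible_index_sets N" for x
    using mem_KIset_iff[OF admissible_sub] by (metis UN_iff)
  ultimately show ?thesis by blast
qed

end
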